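(* Let $q \geq 3$ be an integer, let $p$ be a prime with $p \geq q$, and let $r$ be a power of $p$. Let $\omega_0, \omega_1, \ldots, \omega_{q-1}$ be nonnegative integers with $\omega_0 + \omega_1 + \cdots + \omega_{q-1} = r$. Then for every integer $d_0$ with $1 \leq d_0 \leq r-2$, there exists a $q$-ary constant-composition code $C \subseteq V_{r,[\omega_0,\ldots,\omega_{q-1}]}(q)$ with minimum Hamming distance at least $\mu_p(d_0)+2$ and with $$|C| \;\geq\; \binom{r}{\omega_0,\omega_1,\ldots,\omega_{q-1}} \Big/ r^{d_0-1},$$ where $\binom{r}{\omega_0,\ldots,\omega_{q-1}} = \frac{r!}{\omega_0!\,\omega_1!\cdots\omega_{q-1}!}$ is the multinomial coefficient.
   Context: Let $\mathbb{Z}_q = \{0,1,\ldots,q-1\}$ and let $\mathbb{Z}_q^n$ be the set of $n$-tuples over $\mathbb{Z}_q$. For nonnegative integers $\omega_0,\ldots,\omega_{q-1}$ with sum $n$, $V_{n,[\omega_0,\ldots,\omega_{q-1}]}(q)$ denotes the set of $n$-tuples over $\mathbb{Z}_q$ in which, for each $j \in \{0,\ldots,q-1\}$, the symbol $j$ occurs exactly $\omega_j$ times. A $q$-ary constant-composition code with composition $[\omega_0,\ldots,\omega_{q-1}]$ is a subset of $V_{n,[\omega_0,\ldots,\omega_{q-1}]}(q)$; its minimum distance is the minimum Hamming distance between distinct codewords. For a prime $p$ and positive integer $e$, define $\mu_p(e) = e$ if $p \mid e$, and $\mu_p(e) = e-1$ otherwise. *)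

theory Defs
  imports Complex_Main "HOL-Library.FuncSet" "HOL-Computational_Algebra.Primes"
begin

text \<open>Words of length n over Z_q are represented as functions nat => nat that map
  {..<n} into {..<q} and are 0 (undefined) outside {..<n} (extensional functions).\<close>

definition const_comp_words :: "nat \<Rightarrow> nat \<Rightarrow> (nat \<Rightarrow> nat) \<Rightarrow> (nat \<Rightarrow> nat) set" where
  "const_comp_words q n \<omega> =
     {x \<in> {..<n} \<rightarrow>\<^sub>E {..<q}. \<forall>j<q. card {i \<in> {..<n}. x i = j} = \<omega> j}"

definition hamming_dist :: "nat \<Rightarrow> (nat \<Rightarrow> nat) \<Rightarrow> (nat \<Rightarrow> nat) \<Rightarrow> nat" where
  "hamming_dist n x y = card {i \<in> {..<n}. x i \<noteq> y i}"

definition min_dist_at_least :: "nat \<Rightarrow> (nat \<Rightarrow> nat) set \<Rightarrow> nat \<Rightarrow> bool" where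
  "min_dist_at_least n C D \<longleftrightarrow> (\<forall>x\<in>C. \<forall>y\<in>C. x \<noteq> y \<longrightarrow> D \<le> hamming_dist n x y)"

definition mu :: "nat \<Rightarrow> nat \<Rightarrow> nat" where
  "mu p e = (if p dvd e then e else e - 1)"

definition multinomial :: "nat \<Rightarrow> nat \<Rightarrow> (nat \<Rightarrow> nat) \<Rightarrow> real" where
  "multinomial q r \<omega> = fact r / (\<Prod>j<q. fact (\<omega> j))"

end

theory Submission
  imports Defs "HOL-Algebra.Algebraic_Closure" "HOL-Number_Theory.Residues"
begin

text \<open>
  Let \<open>F\<close> be the field with \<open>r = p^k\<close> elements, listed as \<open>e\<^sub>0, \<dots>, e\<^bsub>r-1\<^esub>\<close>, and read the
  symbols \<open>0, \<dots>, q - 1\<close> as elements of the prime field (this needs \<open>q \<le> p\<close>). A word \<open>x\<close>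
  has syndromes \<open>s\<^sub>t(x) = \<Sum>\<^sub>i x\<^sub>i e\<^sub>i\<^sup>t \<in> F\<close>, and \<open>s\<^sub>0(x)\<close> only depends on the composition of \<open>x\<close>.
  Sorting the words of a fixed composition by \<open>(s\<^sub>1, \<dots>, s\<^bsub>d\<^sub>0-1\<^esub>) \<in> F\<^bsup>d\<^sub>0-1\<^esup>\<close>, some class \<open>C\<close>
  contains at least a fraction \<open>1/r\<^bsup>d\<^sub>0-1\<^esup>\<close> of them. For \<open>x \<noteq> x'\<close> in \<open>C\<close> the difference
  \<open>z = x - x'\<close> satisfies \<open>\<Sum>\<^sub>i z\<^sub>i e\<^sub>i\<^sup>t = 0\<close> for \<open>t < d\<^sub>0\<close>, and, since \<open>z\<^sub>i\<^sup>p = z\<^sub>i\<close>, taking a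
  \<open>p\<close>-th power shows this also for \<open>t = d\<^sub>0\<close> when \<open>p\<close> divides \<open>d\<^sub>0\<close>. A nonzero vector with
  \<open>N\<close> vanishing power sums at distinct points has more than \<open>N\<close> nonzero entries (Vandermonde),
  whence the distance bound \<open>\<mu>\<^sub>p(d\<^sub>0) + 2\<close>.

  The field \<open>F\<close> is the set of roots of \<open>X\<^sup>r - X\<close> in an algebraic closure of \<open>\<int>/p\<close>. There
  are \<open>r\<close> of them: as \<open>x \<mapsto> x\<^sup>r\<close> is additive, \<open>X\<^sup>r - X\<close> is invariant under translation by
  any of its roots, which rules out a double root over an infinite field.
\<close>

hide_const (open) Divisibility.prime

section \<open>Counting constant-composition words\<close>

definition const_comp_words_on :: "nat set \<Rightarrow> nat \<Rightarrow> (nat \<Rightarrow> nat) \<Rightarrow> (nat \<Rightarrow> nat) set" where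
  "const_comp_words_on I q \<omega> = {x \<in> I \<rightarrow>\<^sub>E {..<q}. \<forall>j<q. card {i \<in> I. x i = j} = \<omega> j}"

lemma const_comp_words_eq_on: "const_comp_words q n \<omega> = const_comp_words_on {..<n} q \<omega>"
  by (simp add: const_comp_words_def const_comp_words_on_def)

lemma finite_const_comp_words_on: "finite I \<Longrightarrow> finite (const_comp_words_on I q \<omega>)"
  unfolding const_comp_words_on_def
  by (rule finite_subset[OF _ finite_PiE[of I "\<lambda>_. {..<q}"]]) auto

lemma sum_const_comp_word:
  assumes "finite I" "x \<in> const_comp_words_on I q \<omega>"
  shows "(\<Sum>i\<in>I. x i) = (\<Sum>j<q. j * \<omega> j)"
proof -
  have img: "x ` I \<subseteq> {..<q}"
    using assms by (auto simp: const_comp_words_on_def PiE_def Pi_def)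
  have "(\<Sum>i\<in>I. x i) = (\<Sum>j<q. \<Sum>i\<in>{i\<in>I. x i = j}. x i)"
    using sum.group[OF assms(1) _ img, of x] by simp
  also have "\<dots> = (\<Sum>j<q. j * card {i\<in>I. x i = j})"
    by (intro sum.cong) simp_all
  also have "\<dots> = (\<Sum>j<q. j * \<omega> j)"
    using assms(2) by (intro sum.cong) (simp_all add: const_comp_words_on_def)
  finally show ?thesis .
qed

definition place_symbol :: "nat \<Rightarrow> nat set \<times> (nat \<Rightarrow> nat) \<Rightarrow> nat \<Rightarrow> nat" where
  "place_symbol j = (\<lambda>(A, y) i. if i \<in> A then j else y i)"

lemma const_comp_words_on_Suc:
  "const_comp_words_on I (Suc q) \<omega> =
     place_symbol q ` (SIGMA A:{A. A \<subseteq> I \<and> card A = \<omega> q}. const_comp_words_on (I - A) q \<omega>)"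
  (is "?W = place_symbol q ` ?S")
proof
  show "place_symbol q ` ?S \<subseteq> ?W"
  proof clarify
    fix A y assume A: "A \<subseteq> I" "card A = \<omega> q" and y: "y \<in> const_comp_words_on (I - A) q \<omega>"
    have "card {i \<in> I. place_symbol q (A, y) i = j} = \<omega> j" if "j < Suc q" for j
    proof (cases "j = q")
      case True
      then have "{i \<in> I. place_symbol q (A, y) i = j} = A"
        using y A by (auto simp: place_symbol_def const_comp_words_on_def PiE_def Pi_def)
      then show ?thesis using A True by simp
    next
      case False
      then have "{i \<in> I. place_symbol q (A, y) i = j} = {i \<in> I - A. y i = j}"
        by (auto simp: place_symbol_def)
      then show ?thesis using y that False by (simp add: const_comp_words_on_def)
    qed
    moreover have "place_symbol q (A, y) \<in> I \<rightarrow>\<^sub>E {..<Suc q}"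
      using y A by (auto simp: place_symbol_def const_comp_words_on_def PiE_def Pi_def extensional_def)
    ultimately show "place_symbol q (A, y) \<in> ?W" by (simp add: const_comp_words_on_def)
  qed
next
  show "?W \<subseteq> place_symbol q ` ?S"
  proof
    fix x assume x: "x \<in> ?W"
    define A where "A = {i \<in> I. x i = q}"
    define y where "y = restrict x (I - A)"
    have "y \<in> (I - A) \<rightarrow>\<^sub>E {..<q}"
      using x by (auto simp: y_def A_def const_comp_words_on_def PiE_def Pi_def less_Suc_eq)
    moreover have "{i \<in> I - A. y i = j} = {i \<in> I. x i = j}" if "j < q" for j
      using that by (auto simp: y_def A_def)
    ultimately have "(A, y) \<in> ?S"
      using x by (auto simp: A_def const_comp_words_on_def)
    moreover have "x = place_symbol q (A, y)"
      using x by (auto simp: place_symbol_def y_def A_def const_comp_words_on_def PiE_def extensional_def)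
    ultimately show "x \<in> place_symbol q ` ?S" by blast
  qed
qed

lemma inj_on_place_symbol:
  "inj_on (place_symbol q) (SIGMA A:{A. A \<subseteq> I}. const_comp_words_on (I - A) q \<omega>)"
proof (rule inj_onI, clarify)
  fix A y A' y'
  assume A: "A \<subseteq> I" "A' \<subseteq> I"
    and y: "y \<in> const_comp_words_on (I - A) q \<omega>" "y' \<in> const_comp_words_on (I - A') q \<omega>"
    and eq: "place_symbol q (A, y) = place_symbol q (A', y')"
  have "y i < q" if "i \<in> I - A" for i
    using y(1) that by (auto simp: const_comp_words_on_def PiE_def Pi_def)
  then have "A = {i \<in> I. place_symbol q (A, y) i = q}"
    using A by (force simp: place_symbol_def)
  moreover have "y' i < q" if "i \<in> I - A'" for i
    using y(2) that by (auto simp: const_comp_words_on_def PiE_def Pi_def)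
  then have "A' = {i \<in> I. place_symbol q (A', y') i = q}"
    using A by (force simp: place_symbol_def)
  ultimately have "A = A'" using eq by simp
  moreover have "y i = y' i" for i
  proof (cases "i \<in> I - A")
    case True
    then show ?thesis using fun_cong[OF eq, of i] \<open>A = A'\<close> by (simp add: place_symbol_def)
  next
    case False
    then show ?thesis
      using y \<open>A = A'\<close> by (auto simp: const_comp_words_on_def PiE_def extensional_def)
  qed
  ultimately show "A = A' \<and> y = y'" by auto
qed

lemma card_const_comp_words_on:
  assumes "finite I" "(\<Sum>j<q. \<omega> j) = card I"
  shows "real (card (const_comp_words_on I q \<omega>)) = fact (card I) / (\<Prod>j<q. fact (\<omega> j))"
  using assms
proof (induction q arbitrary: I)
  case 0
  then show ?case by (simp add: const_comp_words_on_def)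
next
  case (Suc q)
  define n where "n = card I"
  define S where "S = {A. A \<subseteq> I \<and> card A = \<omega> q}"
  have rest: "real (card (const_comp_words_on (I - A) q \<omega>)) = fact (n - \<omega> q) / (\<Prod>j<q. fact (\<omega> j))"
    if "A \<in> S" for A
  proof -
    have "card (I - A) = n - \<omega> q"
      using that Suc.prems by (auto simp: S_def n_def card_Diff_subset finite_subset)
    then show ?thesis
      using Suc.IH[of "I - A"] Suc.prems by (simp add: n_def)
  qed
  have inj: "inj_on (place_symbol q) (SIGMA A:S. const_comp_words_on (I - A) q \<omega>)"
    by (rule inj_on_subset[OF inj_on_place_symbol[where I = I and \<omega> = \<omega>]]) (auto simp: S_def)
  have "real (card (const_comp_words_on I (Suc q) \<omega>))
      = (\<Sum>A\<in>S. real (card (const_comp_words_on (I - A) q \<omega>)))"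
    unfolding const_comp_words_on_Suc S_def[symmetric] card_image[OF inj] using Suc.prems
    by (subst card_SigmaI) (auto simp: S_def intro: finite_const_comp_words_on)
  also have "\<dots> = real (n choose \<omega> q) * (fact (n - \<omega> q) / (\<Prod>j<q. fact (\<omega> j)))"
    using Suc.prems by (simp add: rest S_def n_subsets n_def)
  also have "\<dots> = fact n / (\<Prod>j<Suc q. fact (\<omega> j))"
    using Suc.prems by (simp add: binomial_fact n_def field_simps)
  finally show ?case by (simp add: n_def)
qed

lemma card_const_comp_words:
  "(\<Sum>j<q. \<omega> j) = n \<Longrightarrow> real (card (const_comp_words q n \<omega>)) = multinomial q n \<omega>"
  using card_const_comp_words_on[where I = "{..<n}" and q = q and \<omega> = \<omega>]
  by (simp add: const_comp_words_eq_on multinomial_def)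

lemma exists_large_fiber:
  assumes "finite W" "f ` W \<subseteq> Y" "finite Y" "Y \<noteq> {}"
  obtains y where "y \<in> Y" "card W \<le> card Y * card {x \<in> W. f x = y}"
proof -
  have "\<exists>y\<in>Y. card W \<le> card Y * card {x \<in> W. f x = y}"
  proof (rule ccontr)
    assume "\<not> ?thesis"
    then have less: "card Y * card {x \<in> W. f x = y} < card W" if "y \<in> Y" for y
      using that by force
    have "card Y * card W = (\<Sum>y\<in>Y. card Y * card {x \<in> W. f x = y})"
      using sum.group[OF assms(1,3,2), of "\<lambda>_. 1::nat"] by (simp flip: sum_distrib_left)
    also have "\<dots> < (\<Sum>y\<in>Y. card W)"
      using less assms(3,4) by (intro sum_strict_mono) auto
    finally show False by simp
  qed
  then show thesis using that by blast
qed

section \<open>Rings of prime characteristic\<close>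

primrec ring_of_nat :: "('a, 'b) ring_scheme \<Rightarrow> nat \<Rightarrow> 'a" where
  "ring_of_nat R 0 = \<zero>\<^bsub>R\<^esub>"
| "ring_of_nat R (Suc n) = ring_of_nat R n \<oplus>\<^bsub>R\<^esub> \<one>\<^bsub>R\<^esub>"

lemma ring_of_nat_hom:
  assumes "ring_hom_ring A B h"
  shows "h (ring_of_nat A n) = ring_of_nat B n"
proof -
  interpret ring_hom_ring A B h by fact
  have "ring_of_nat A m \<in> carrier A" for m by (induction m) simp_all
  then show ?thesis by (induction n) (simp_all add: hom_add)
qed

lemma ring_of_nat_residue_ring:
  assumes "prime p"
  shows "ring_of_nat (residue_ring (int p)) n = int n mod int p"
proof -
  interpret residues_prime p "residue_ring (int p)" using assms by unfold_locales auto
  show ?thesis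
    by (induction n) (simp_all add: res_add_eq res_one_eq res_zero_eq mod_add_right_eq add.commute)
qed

context cring
begin

lemma ring_of_nat_closed [simp]: "ring_of_nat R n \<in> carrier R"
  by (induction n) auto

lemma ring_of_nat_add: "ring_of_nat R (m + n) = ring_of_nat R m \<oplus> ring_of_nat R n"
  by (induction n) (auto simp: a_ac)

lemma ring_of_nat_mult: "ring_of_nat R (m * n) = ring_of_nat R m \<otimes> ring_of_nat R n"
  by (induction n) (auto simp: ring_of_nat_add r_distr a_comm)

lemma ring_of_nat_sum: "finite A \<Longrightarrow> ring_of_nat R (sum g A) = (\<Oplus>i\<in>A. ring_of_nat R (g i))"
  by (induction A rule: finite_induct) (simp_all add: ring_of_nat_add finsum_insert)

lemma binomial_expansion:
  assumes x: "x \<in> carrier R" and y: "y \<in> carrier R"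
  shows "(x \<oplus> y) [^] n = (\<Oplus>k\<in>{..n}. ring_of_nat R (n choose k) \<otimes> (x [^] k \<otimes> y [^] (n - k)))"
proof (induction n)
  case 0
  then show ?case using x y by simp
next
  case (Suc n)
  define B where "B = (\<lambda>n k. ring_of_nat R (n choose k) \<otimes> (x [^] k \<otimes> y [^] (n - k)))"
  have Bc: "B m k \<in> carrier R" for m k using x y by (simp add: B_def)
  have "(x \<oplus> y) [^] Suc n = (\<Oplus>k\<in>{..n}. B n k) \<otimes> x \<oplus> (\<Oplus>k\<in>{..n}. B n k) \<otimes> y"
    using x y Suc by (simp add: r_distr Bc B_def)
  also have "(\<Oplus>k\<in>{..n}. B n k) \<otimes> x
      = (\<Oplus>k\<in>{..n}. ring_of_nat R (n choose k) \<otimes> (x [^] Suc k \<otimes> y [^] (n - k)))"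
    using x y by (subst finsum_ldistr) (auto simp: Bc B_def m_ac intro!: finsum_cong)
  also have "(\<Oplus>k\<in>{..n}. B n k) \<otimes> y
      = (\<Oplus>k\<in>{..n}. ring_of_nat R (n choose k) \<otimes> (x [^] k \<otimes> y [^] (Suc n - k)))"
    using x y by (subst finsum_ldistr) (auto simp: Bc B_def m_ac Suc_diff_le intro!: finsum_cong)
  also have "\<dots> = (\<Oplus>k\<in>{..Suc n}. ring_of_nat R (n choose k) \<otimes> (x [^] k \<otimes> y [^] (Suc n - k)))"
    using x y by (subst finsum_Suc) (auto simp: binomial_eq_0)
  also have "\<dots> = (\<Oplus>k\<in>{..n}. ring_of_nat R (n choose Suc k) \<otimes> (x [^] Suc k \<otimes> y [^] (n - k)))
                  \<oplus> y [^] Suc n"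
    using x y by (subst finsum_Suc2) auto
  also have "(\<Oplus>k\<in>{..n}. ring_of_nat R (n choose k) \<otimes> (x [^] Suc k \<otimes> y [^] (n - k))) \<oplus> \<dots>
      = (\<Oplus>k\<in>{..n}. ring_of_nat R (n choose k) \<otimes> (x [^] Suc k \<otimes> y [^] (n - k)) \<oplus>
                       ring_of_nat R (n choose Suc k) \<otimes> (x [^] Suc k \<otimes> y [^] (n - k))) \<oplus> y [^] Suc n"
    using x y by (subst finsum_addf) (auto simp: a_assoc)
  also have "\<dots> = (\<Oplus>k\<in>{..n}. B (Suc n) (Suc k)) \<oplus> B (Suc n) 0"
    using x y by (auto simp: B_def l_distr ring_of_nat_add intro!: finsum_cong)
  also have "\<dots> = (\<Oplus>k\<in>{..Suc n}. B (Suc n) k)"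
    using x y by (subst finsum_Suc2) (auto simp: Bc)
  finally show ?case by (simp add: B_def)
qed

lemma frobenius_add:
  assumes p: "prime p" and char: "ring_of_nat R p = \<zero>"
    and x: "x \<in> carrier R" and y: "y \<in> carrier R"
  shows "(x \<oplus> y) [^] p = x [^] p \<oplus> y [^] p"
proof -
  have p0: "p \<noteq> 0" using p by (auto simp: prime_gt_0_nat)
  have "(x \<oplus> y) [^] p = (\<Oplus>k\<in>{..p}. ring_of_nat R (p choose k) \<otimes> (x [^] k \<otimes> y [^] (p - k)))"
    by (rule binomial_expansion[OF x y])
  also have "\<dots> = (\<Oplus>k\<in>{0, p}. ring_of_nat R (p choose k) \<otimes> (x [^] k \<otimes> y [^] (p - k)))"
  proof (rule add.finprod_mono_neutral_cong_right)
    show "ring_of_nat R (p choose i) \<otimes> (x [^] i \<otimes> y [^] (p - i)) = \<zero>" if "i \<in> {..p} - {0, p}" for i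
    proof -
      have "p dvd (p choose i)" using that p p0 by (intro dvd_choose_prime) auto
      then obtain m where "p choose i = p * m" by blast
      then show ?thesis using x y by (simp add: ring_of_nat_mult char)
    qed
  qed (use x y in auto)
  also have "\<dots> = x [^] p \<oplus> y [^] p"
    using x y p0 by (simp add: a_comm)
  finally show ?thesis .
qed

lemma frobenius_diff:
  assumes p: "prime p" and char: "ring_of_nat R p = \<zero>"
    and x: "x \<in> carrier R" and y: "y \<in> carrier R"
  shows "(x \<ominus> y) [^] p = x [^] p \<ominus> y [^] p"
proof -
  have "x [^] p = ((x \<ominus> y) \<oplus> y) [^] p"
    using x y unfolding minus_eq by algebra
  also have "\<dots> = (x \<ominus> y) [^] p \<oplus> y [^] p"
    using x y by (intro frobenius_add[OF p char]) auto
  finally show ?thesis using x y by (simp add: minus_eq a_assoc r_neg)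
qed

lemma frobenius_power_add:
  assumes p: "prime p" and char: "ring_of_nat R p = \<zero>"
    and x: "x \<in> carrier R" and y: "y \<in> carrier R"
  shows "(x \<oplus> y) [^] (p ^ k) = x [^] (p ^ k) \<oplus> y [^] (p ^ k)"
proof (induction k)
  case (Suc k)
  have "(x \<oplus> y) [^] (p ^ Suc k) = ((x \<oplus> y) [^] (p ^ k)) [^] p"
    using x y by (simp add: nat_pow_pow mult.commute)
  also have "\<dots> = x [^] (p ^ Suc k) \<oplus> y [^] (p ^ Suc k)"
    using Suc x y by (simp add: frobenius_add[OF p char] nat_pow_pow mult.commute)
  finally show ?case .
qed (use x y in simp)

lemma frobenius_power_finsum:
  assumes p: "prime p" and char: "ring_of_nat R p = \<zero>"
    and A: "finite A" and f: "f \<in> A \<rightarrow> carrier R"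
  shows "(\<Oplus>i\<in>A. f i) [^] (p ^ k) = (\<Oplus>i\<in>A. f i [^] (p ^ k))"
  using A f
proof (induction A rule: finite_induct)
  case empty
  have "p ^ k \<noteq> 0" using p by (simp add: prime_gt_0_nat)
  then show ?case by (simp add: nat_pow_zero)
next
  case (insert a A)
  then show ?case
    by (simp add: finsum_insert frobenius_power_add[OF p char] finsum_closed Pi_def)
qed

lemma ring_of_nat_power_char:
  assumes p: "prime p" and char: "ring_of_nat R p = \<zero>"
  shows "ring_of_nat R n [^] (p ^ k) = ring_of_nat R n"
proof (induction n)
  case 0
  have "p ^ k \<noteq> 0" using p by (simp add: prime_gt_0_nat)
  then show ?case by (simp add: nat_pow_zero)
next
  case (Suc n)
  then show ?case by (simp add: frobenius_power_add[OF p char])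
qed

lemma power_sums_vanish_at_char_multiple:
  assumes p: "prime p" and char: "ring_of_nat R p = \<zero>" and T: "finite T"
    and z: "\<And>i. i \<in> T \<Longrightarrow> z i \<in> carrier R \<and> z i [^] p = z i"
    and e: "e ` T \<subseteq> carrier R"
    and vanish: "(\<Oplus>i\<in>T. z i \<otimes> e i [^] m) = \<zero>"
  shows "(\<Oplus>i\<in>T. z i \<otimes> e i [^] (p * m)) = \<zero>"
proof -
  have "(\<Oplus>i\<in>T. z i \<otimes> e i [^] (p * m)) = (\<Oplus>i\<in>T. (z i \<otimes> e i [^] m) [^] (p ^ 1))"
    using z e by (intro finsum_cong') (auto simp: nat_pow_distrib nat_pow_pow mult.commute)
  also have "\<dots> = (\<Oplus>i\<in>T. z i \<otimes> e i [^] m) [^] (p ^ 1)"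
    using z e by (intro frobenius_power_finsum[OF p char T, symmetric]) auto
  finally show ?thesis
    using vanish p by (simp add: nat_pow_zero prime_gt_0_nat)
qed

end

section \<open>Vanishing power sums\<close>

context domain
begin

lemma finprod_nonzero:
  assumes "finite B" "f \<in> B \<rightarrow> carrier R" "\<And>b. b \<in> B \<Longrightarrow> f b \<noteq> \<zero>"
  shows "finprod R f B \<noteq> \<zero>"
  using assms
proof (induction B rule: finite_induct)
  case (insert a B)
  then show ?case by (simp add: finprod_insert integral_iff finprod_closed Pi_def)
qed simp

lemma finprod_zero_factor:
  assumes "finite B" "f \<in> B \<rightarrow> carrier R" "b \<in> B" "f b = \<zero>"
  shows "finprod R f B = \<zero>"
proof -
  have "finprod R f (insert b (B - {b})) = f b \<otimes> finprod R f (B - {b})"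
    using assms by (intro finprod_insert) auto
  then show ?thesis using assms by (simp add: insert_absorb finprod_closed Pi_def)
qed

lemma power_sums_times_finprod_vanish:
  assumes I: "finite I" and e: "e ` I \<subseteq> carrier R" and w: "w \<in> I \<rightarrow> carrier R"
    and vanish: "\<And>t. t < N \<Longrightarrow> (\<Oplus>i\<in>I. w i \<otimes> e i [^] t) = \<zero>"
    and B: "finite B" "B \<subseteq> carrier R" and t: "card B + t < N"
  shows "(\<Oplus>i\<in>I. w i \<otimes> e i [^] t \<otimes> (\<Otimes>b\<in>B. e i \<ominus> b)) = \<zero>"
  using B t
proof (induction B arbitrary: t rule: finite_induct)
  case empty
  have "(\<Oplus>i\<in>I. w i \<otimes> e i [^] t \<otimes> \<one>) = (\<Oplus>i\<in>I. w i \<otimes> e i [^] t)"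
    using e w by (intro finsum_cong') (auto simp: image_subset_iff Pi_def)
  then show ?case using vanish[of t] empty by simp
next
  case (insert b B)
  have ec: "e i \<in> carrier R" and wc: "w i \<in> carrier R" if "i \<in> I" for i
    using e w that by auto
  have bc: "b \<in> carrier R" and Bc: "B \<subseteq> carrier R" using insert by auto
  define P where "P i = (\<Otimes>b\<in>B. e i \<ominus> b)" for i
  have Pc: "P i \<in> carrier R" if "i \<in> I" for i
    unfolding P_def using ec[OF that] Bc by (intro finprod_closed) auto
  have h1: "(\<Oplus>i\<in>I. w i \<otimes> e i [^] Suc t \<otimes> P i) = \<zero>"
    using insert.IH[of "Suc t"] insert.prems insert.hyps Bc by (simp add: P_def)
  have h2: "(\<Oplus>i\<in>I. w i \<otimes> e i [^] t \<otimes> P i) = \<zero>"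
    using insert.IH[of t] insert.prems insert.hyps Bc by (simp add: P_def)
  have "(\<Oplus>i\<in>I. w i \<otimes> e i [^] t \<otimes> (\<Otimes>b\<in>insert b B. e i \<ominus> b))
      = (\<Oplus>i\<in>I. w i \<otimes> e i [^] Suc t \<otimes> P i \<oplus> (\<ominus> b) \<otimes> (w i \<otimes> e i [^] t \<otimes> P i))"
  proof (rule finsum_cong')
    fix i assume i: "i \<in> I"
    have "(\<Otimes>b\<in>insert b B. e i \<ominus> b) = (e i \<ominus> b) \<otimes> P i"
      unfolding P_def using insert ec[OF i] bc Bc by (subst finprod_insert) auto
    moreover have "w i \<otimes> E \<otimes> ((e i \<ominus> b) \<otimes> P i)
        = w i \<otimes> (E \<otimes> e i) \<otimes> P i \<oplus> (\<ominus> b) \<otimes> (w i \<otimes> E \<otimes> P i)"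
      if "E \<in> carrier R" for E
      using that ec[OF i] wc[OF i] Pc[OF i] bc unfolding minus_eq by algebra
    ultimately show "w i \<otimes> e i [^] t \<otimes> (\<Otimes>b\<in>insert b B. e i \<ominus> b)
        = w i \<otimes> e i [^] Suc t \<otimes> P i \<oplus> (\<ominus> b) \<otimes> (w i \<otimes> e i [^] t \<otimes> P i)"
      using ec[OF i] by (metis nat_pow_Suc nat_pow_closed)
  qed (use ec wc Pc bc in auto)
  also have "\<dots> = (\<Oplus>i\<in>I. w i \<otimes> e i [^] Suc t \<otimes> P i)
                  \<oplus> (\<Oplus>i\<in>I. (\<ominus> b) \<otimes> (w i \<otimes> e i [^] t \<otimes> P i))"
    using ec wc Pc bc by (intro finsum_addf) auto
  also have "(\<Oplus>i\<in>I. (\<ominus> b) \<otimes> (w i \<otimes> e i [^] t \<otimes> P i))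
      = (\<ominus> b) \<otimes> (\<Oplus>i\<in>I. w i \<otimes> e i [^] t \<otimes> P i)"
    using ec wc Pc bc I by (intro finsum_rdistr[symmetric]) auto
  finally show ?case using h1 h2 bc by simp
qed

text \<open>Pair the weights with \<open>\<Prod>\<^bsub>i \<noteq> i\<^sub>0\<^esub> (X - e\<^sub>i)\<close>, which vanishes at every \<open>e\<^sub>i\<close> but \<open>e\<^bsub>i\<^sub>0\<^esub>\<close>.\<close>

lemma vanishing_power_sums_card_gt:
  assumes T: "finite T" "T \<noteq> {}" and inj: "inj_on e T" and e: "e ` T \<subseteq> carrier R"
    and w: "\<And>i. i \<in> T \<Longrightarrow> w i \<in> carrier R - {\<zero>}"
    and vanish: "\<And>t. t < N \<Longrightarrow> (\<Oplus>i\<in>T. w i \<otimes> e i [^] t) = \<zero>"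
  shows "N < card T"
proof (rule ccontr)
  assume "\<not> N < card T"
  obtain i0 where i0: "i0 \<in> T" using T by blast
  have ec: "e i \<in> carrier R" and wc: "w i \<in> carrier R" if "i \<in> T" for i
    using e w that by auto
  define B where "B = e ` (T - {i0})"
  define P where "P i = (\<Otimes>b\<in>B. e i \<ominus> b)" for i
  have Bc: "B \<subseteq> carrier R" "finite B" using e T by (auto simp: B_def)
  have Pc: "P i \<in> carrier R" if "i \<in> T" for i
    unfolding P_def using ec[OF that] Bc by (intro finprod_closed) auto
  have "card B = card T - 1"
    unfolding B_def using inj T i0 by (subst card_image) (auto intro: inj_on_subset)
  moreover have "card T \<ge> 1" using T by (simp add: Suc_leI card_gt_0_iff)
  ultimately have "card B + 0 < N" using \<open>\<not> N < card T\<close> by simp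
  moreover have "w \<in> T \<rightarrow> carrier R" using wc by blast
  ultimately have "(\<Oplus>i\<in>T. w i \<otimes> e i [^] (0::nat) \<otimes> P i) = \<zero>"
    unfolding P_def using power_sums_times_finprod_vanish[OF T(1) e _ vanish Bc(2) Bc(1)] by blast
  moreover have "(\<Oplus>i\<in>T. w i \<otimes> e i [^] (0::nat) \<otimes> P i) = (\<Oplus>i\<in>{i0}. w i \<otimes> e i [^] (0::nat) \<otimes> P i)"
  proof (rule add.finprod_mono_neutral_cong_right)
    show "w i \<otimes> e i [^] (0::nat) \<otimes> P i = \<zero>" if "i \<in> T - {i0}" for i
    proof -
      have "P i = \<zero>" unfolding P_def
        using that Bc ec by (intro finprod_zero_factor[of B _ "e i"]) (auto simp: B_def)
      then show ?thesis using that wc ec by simp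
    qed
  qed (use T i0 wc ec Pc in auto)
  ultimately have "w i0 \<otimes> P i0 = \<zero>" using i0 wc ec Pc by simp
  moreover have "P i0 \<noteq> \<zero>" unfolding P_def
  proof (rule finprod_nonzero)
    show "b \<in> B \<Longrightarrow> e i0 \<ominus> b \<noteq> \<zero>" for b
      using inj i0 ec unfolding B_def by (auto simp: inj_on_def r_right_minus_eq)
  qed (use Bc ec i0 in auto)
  ultimately show False using w[OF i0] Pc[OF i0] by (simp add: integral_iff)
qed

end

section \<open>Polynomial functions\<close>

definition (in ring) poly_function :: "('a \<Rightarrow> 'a) \<Rightarrow> bool" where
  "poly_function f \<longleftrightarrow> (\<exists>g\<in>carrier (poly_ring R). \<forall>y\<in>carrier R. eval g y = f y)"

context domain
begin

lemma poly_function_const: "c \<in> carrier R \<Longrightarrow> poly_function (\<lambda>_. c)"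
  unfolding poly_function_def
proof (intro bexI ballI)
  fix y assume c: "c \<in> carrier R" and y: "y \<in> carrier R"
  show "eval (poly_of_const c) y = c"
    unfolding poly_of_const_def using c y by (subst eval_normalize) auto
next
  assume "c \<in> carrier R"
  then show "poly_of_const c \<in> carrier (poly_ring R)"
    using canonical_embedding_is_hom[OF carrier_is_subring] by (auto simp: ring_hom_def)
qed

lemma poly_function_id: "poly_function (\<lambda>y. y)"
  unfolding poly_function_def using var_closed(1)[OF carrier_is_subring] eval_var by blast

lemma poly_function_add:
  assumes "poly_function f" "poly_function g"
  shows "poly_function (\<lambda>y. f y \<oplus> g y)"
proof -
  interpret PR: ring "poly_ring R" by (rule univ_poly_is_ring[OF carrier_is_subring])
  obtain f' g' where "f' \<in> carrier (poly_ring R)" "g' \<in> carrier (poly_ring R)"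
    "\<forall>y\<in>carrier R. eval f' y = f y" "\<forall>y\<in>carrier R. eval g' y = g y"
    using assms by (auto simp: poly_function_def)
  moreover have "set f' \<subseteq> carrier R" "set g' \<subseteq> carrier R"
    using calculation polynomial_incl univ_poly_carrier by blast+
  ultimately show ?thesis
    unfolding poly_function_def
    by (intro bexI[of _ "f' \<oplus>\<^bsub>poly_ring R\<^esub> g'"] ballI)
       (simp add: univ_poly_add eval_poly_add del: poly_add.simps, simp)
qed

lemma poly_function_mult:
  assumes "poly_function f" "poly_function g"
  shows "poly_function (\<lambda>y. f y \<otimes> g y)"
proof -
  interpret PR: ring "poly_ring R" by (rule univ_poly_is_ring[OF carrier_is_subring])
  obtain f' g' where "f' \<in> carrier (poly_ring R)" "g' \<in> carrier (poly_ring R)"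
    "\<forall>y\<in>carrier R. eval f' y = f y" "\<forall>y\<in>carrier R. eval g' y = g y"
    using assms by (auto simp: poly_function_def)
  moreover have "set f' \<subseteq> carrier R" "set g' \<subseteq> carrier R"
    using calculation polynomial_incl univ_poly_carrier by blast+
  ultimately show ?thesis
    unfolding poly_function_def
    by (intro bexI[of _ "f' \<otimes>\<^bsub>poly_ring R\<^esub> g'"] ballI)
       (simp add: univ_poly_mult eval_poly_mult, simp)
qed

lemma poly_function_pow: "poly_function f \<Longrightarrow> poly_function (\<lambda>y. f y [^] (n::nat))"
  by (induction n) (simp_all add: poly_function_const poly_function_mult)

lemma poly_function_eval_shift:
  assumes "set g \<subseteq> carrier R" "a \<in> carrier R"
  shows "poly_function (\<lambda>y. eval g (a \<oplus> y))"
  using assms(1)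
proof (induction g)
  case Nil
  then show ?case using poly_function_const[of \<zero>] by simp
next
  case (Cons c g)
  have "poly_function (\<lambda>y. c \<otimes> (a \<oplus> y) [^] length g \<oplus> eval g (a \<oplus> y))"
    using Cons assms(2)
    by (intro poly_function_add poly_function_mult poly_function_pow poly_function_const
        poly_function_id) auto
  then show ?case by simp
qed

lemma poly_function_infinite_roots:
  assumes "poly_function f" "infinite {y \<in> carrier R. f y = \<zero>}" "y \<in> carrier R"
  shows "f y = \<zero>"
proof -
  obtain g where g: "g \<in> carrier (poly_ring R)" "\<forall>y\<in>carrier R. eval g y = f y"
    using assms(1) by (auto simp: poly_function_def)
  have "{y \<in> carrier R. f y = \<zero>} \<subseteq> {x. is_root g x}" if "g \<noteq> []"
    using g that by (auto simp: is_root_def)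
  then have "g = []"
    using finite_number_of_roots[OF g(1)] assms(2) finite_subset by blast
  then show ?thesis using g assms(3) by auto
qed

lemma minus_one_neq_zero: "\<ominus> \<one> \<noteq> \<zero>"
proof
  assume "\<ominus> \<one> = \<zero>"
  then have "\<ominus> (\<ominus> \<one>) = \<ominus> \<zero>" by simp
  then show False by simp
qed

lemma eval_factor_of_double_root:
  assumes P: "P \<in> carrier (poly_ring R)" and a: "a \<in> carrier R" and "2 \<le> alg_mult P a"
  shows "\<exists>g. set g \<subseteq> carrier R \<and>
           (\<forall>y\<in>carrier R. eval P y = (y \<ominus> a) [^] (2::nat) \<otimes> eval g y)"
proof -
  have "[\<one>, \<ominus> a] [^]\<^bsub>poly_ring R\<^esub> (2::nat) pdivides P"
    by (rule le_alg_mult_imp_pdivides[OF a P \<open>2 \<le> alg_mult P a\<close>])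
  then obtain g where g: "g \<in> carrier (poly_ring R)"
      and Pg: "P = ([\<one>, \<ominus> a] [^]\<^bsub>poly_ring R\<^esub> (2::nat)) \<otimes>\<^bsub>poly_ring R\<^esub> g"
    unfolding pdivides_def factor_def by blast
  have lin: "[\<one>, \<ominus> a] \<in> carrier (poly_ring R)"
    using a unfolding sym[OF univ_poly_carrier] polynomial_def by auto
  have "eval P y = (y \<ominus> a) [^] (2::nat) \<otimes> eval g y" if y: "y \<in> carrier R" for y
  proof -
    interpret E: ring_hom_ring "poly_ring R" R "\<lambda>p. eval p y"
      by (rule eval_ring_hom[OF carrier_is_subring y])
    show ?thesis
      unfolding Pg using lin g y a by (simp add: E.hom_mult E.hom_nat_pow minus_eq)
  qed
  moreover have "set g \<subseteq> carrier R" using g polynomial_incl univ_poly_carrier by blast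
  ultimately show ?thesis by blast
qed

text \<open>
  If \<open>P = (X - a)\<^sup>2 g\<close> then \<open>y\<^sup>r - y = P(a + y) = y\<^sup>2 g(a + y)\<close>, i.e.
  \<open>y\<^bsup>r-1\<^esup> - 1 = y g(a + y)\<close> for all \<open>y \<noteq> 0\<close>; a polynomial identity on an infinite set,
  which fails at \<open>y = 0\<close>.
\<close>

lemma alg_mult_lt_2_if_shift_invariant:
  fixes r :: nat
  assumes "infinite (carrier R)" and P: "P \<in> carrier (poly_ring R)" and a: "a \<in> carrier R"
    and "r \<ge> 2" and evP: "\<And>y. y \<in> carrier R \<Longrightarrow> eval P y = y [^] r \<ominus> y"
    and shift: "\<And>y. y \<in> carrier R \<Longrightarrow> eval P (a \<oplus> y) = eval P y"
  shows "alg_mult P a < 2"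
proof (rule ccontr)
  assume "\<not> alg_mult P a < 2"
  then have "2 \<le> alg_mult P a" by simp
  then obtain g where gc: "set g \<subseteq> carrier R"
    and evPg: "\<forall>y\<in>carrier R. eval P y = (y \<ominus> a) [^] (2::nat) \<otimes> eval g y"
    using eval_factor_of_double_root[OF P a] by blast
  define d where "d y = y [^] (r - 1) \<oplus> \<ominus> \<one> \<oplus> \<ominus> \<one> \<otimes> (y \<otimes> eval g (a \<oplus> y))" for y
  have pf: "poly_function d"
    unfolding d_def using gc a
    by (intro poly_function_add poly_function_mult poly_function_pow poly_function_const
        poly_function_id poly_function_eval_shift) auto
  have "d y = \<zero>" if y: "y \<in> carrier R" "y \<noteq> \<zero>" for y
  proof -
    define G where "G = eval g (a \<oplus> y)"
    have G: "G \<in> carrier R" unfolding G_def using eval_in_carrier[OF gc] a y by simp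
    have "y [^] r \<ominus> y = eval P (a \<oplus> y)" using evP[OF y(1)] shift[OF y(1)] by simp
    also have "\<dots> = ((a \<oplus> y) \<ominus> a) [^] (2::nat) \<otimes> G"
      using evPg a y by (simp add: G_def)
    also have "(a \<oplus> y) \<ominus> a = y"
      using a y unfolding minus_eq by algebra
    finally have "y [^] r \<ominus> y = y \<otimes> y \<otimes> G"
      using y by (simp add: numeral_2_eq_2)
    moreover have "y [^] (r - 1) \<otimes> y = y [^] r"
      using \<open>r \<ge> 2\<close> by (metis One_nat_def Suc_pred nat_pow_Suc not_numeral_le_zero not_gr0)
    moreover have "y \<otimes> (Y \<oplus> \<ominus> \<one> \<oplus> \<ominus> \<one> \<otimes> (y \<otimes> G)) = (Y \<otimes> y \<ominus> y) \<ominus> y \<otimes> y \<otimes> G"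
      if "Y \<in> carrier R" for Y
      using that y G unfolding minus_eq by algebra
    ultimately have "y \<otimes> d y = \<zero>"
      using y G by (simp add: d_def G_def[symmetric] r_right_minus_eq)
    then show ?thesis
      using y G by (simp add: d_def G_def[symmetric] integral_iff)
  qed
  then have "carrier R - {\<zero>} \<subseteq> {y \<in> carrier R. d y = \<zero>}" by auto
  moreover have "infinite (carrier R - {\<zero>})" using assms(1) by simp
  ultimately have "infinite {y \<in> carrier R. d y = \<zero>}"
    using finite_subset by blast
  then have "d \<zero> = \<zero>" by (intro poly_function_infinite_roots[OF pf]) auto
  moreover have "d \<zero> = \<ominus> \<one>"
    using \<open>r \<ge> 2\<close> eval_in_carrier[OF gc, of a] a by (simp add: d_def nat_pow_zero)
  ultimately show False using minus_one_neq_zero by simp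
qed

end

section \<open>The roots of \<open>X\<^sup>r - X\<close> in an algebraic closure\<close>

definition (in ring) poly_xn_x_c :: "nat \<Rightarrow> 'a \<Rightarrow> 'a list" where
  "poly_xn_x_c n c = \<one> # replicate (n - 2) \<zero> @ [\<ominus> \<one>, \<ominus> c]"

context domain
begin

lemma eval_poly_xn_x_c:
  assumes "c \<in> carrier R" "x \<in> carrier R" "n \<ge> 2"
  shows "eval (poly_xn_x_c n c) x = x [^] n \<ominus> x \<ominus> c"
proof -
  obtain m where n: "n = Suc (Suc m)" using assms(3) by (metis add_2_eq_Suc le_Suc_ex)
  have "eval (poly_xn_x_c n c) x = \<one> \<otimes> x [^] n \<oplus> eval (replicate (n - 2) \<zero> @ [\<ominus> \<one>, \<ominus> c]) x"
    using assms by (simp add: n poly_xn_x_c_def)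
  also have "eval (replicate (n - 2) \<zero> @ [\<ominus> \<one>, \<ominus> c]) x = eval [\<ominus> \<one>, \<ominus> c] x"
    using assms by (intro eval_replicate) auto
  also have "eval [\<ominus> \<one>, \<ominus> c] x = \<ominus> x \<ominus> c" using assms by (simp add: minus_eq l_minus)
  finally show ?thesis using assms by (simp add: minus_eq a_assoc)
qed

lemma eval_poly_xn_x:
  assumes "x \<in> carrier R" "n \<ge> 2"
  shows "eval (poly_xn_x_c n \<zero>) x = x [^] n \<ominus> x"
proof -
  have "x [^] n \<ominus> x \<ominus> \<zero> = x [^] n \<ominus> x"
    using assms minus_eq[of "x [^] n \<ominus> x" \<zero>] by simp
  then show ?thesis using eval_poly_xn_x_c[OF zero_closed assms] by simp
qed

end

context algebraic_closure
begin

lemma poly_xn_x_c_in_carrier: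
  assumes "c \<in> K" "n \<ge> 2"
  shows "poly_xn_x_c n c \<in> carrier (K[X])"
proof -
  have sr: "subring K L" using subfieldE(1)[OF subfield_axioms] .
  have "\<one> \<in> K" "\<zero> \<in> K" "\<ominus> \<one> \<in> K" "\<ominus> c \<in> K"
    using subringE[OF sr] assms by auto
  then show ?thesis
    unfolding poly_xn_x_c_def sym[OF univ_poly_carrier] polynomial_def by auto
qed

lemma poly_xn_x_c_in_poly_ring:
  assumes "c \<in> K" "n \<ge> 2"
  shows "poly_xn_x_c n c \<in> carrier (poly_ring L)"
  using carrier_polynomial_shell[OF subfieldE(1)[OF subfield_axioms]]
    poly_xn_x_c_in_carrier[OF assms] by blast

lemma size_roots_poly_xn_x_c:
  assumes "c \<in> K" "n \<ge> 2"
  shows "size (roots (poly_xn_x_c n c)) = n"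
  using roots_over_subfield[OF poly_xn_x_c_in_carrier[OF assms]] assms
  by (simp add: splitted_def poly_xn_x_c_def)

lemma mem_roots_poly_xn_x_c:
  assumes "c \<in> K" "n \<ge> 2"
  shows "x \<in># roots (poly_xn_x_c n c) \<longleftrightarrow> x \<in> carrier L \<and> x [^] n \<ominus> x \<ominus> c = \<zero>"
proof -
  have "c \<in> carrier L" using assms(1) subset by blast
  moreover have "poly_xn_x_c n c \<noteq> []" by (simp add: poly_xn_x_c_def)
  ultimately show ?thesis
    using roots_mem_iff_is_root[OF poly_xn_x_c_in_poly_ring[OF assms]] eval_poly_xn_x_c assms(2)
    by (auto simp: is_root_def)
qed

lemma zero_in_K: "\<zero> \<in> K"
  using subringE(2)[OF subfieldE(1)[OF subfield_axioms]] .

lemma mem_roots_poly_xn_x: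
  assumes "n \<ge> 2"
  shows "x \<in># roots (poly_xn_x_c n \<zero>) \<longleftrightarrow> x \<in> carrier L \<and> x [^] n = x"
  using roots_mem_iff_is_root[OF poly_xn_x_c_in_poly_ring[OF zero_in_K assms]]
    eval_poly_xn_x[OF _ assms] r_right_minus_eq
  by (auto simp: is_root_def poly_xn_x_c_def)

text \<open>In a finite field every \<open>x\<close> satisfies \<open>x\<^bsup>|L|\<^esup> = x\<close>, so \<open>X\<^bsup>|L|\<^esup> - X - 1\<close> has no root.\<close>

lemma infinite_carrier: "infinite (carrier L)"
proof
  assume fin: "finite (carrier L)"
  define n where "n = card (carrier L)"
  have "card {\<zero>, \<one>} \<le> n" unfolding n_def using fin by (intro card_mono) auto
  then have n2: "n \<ge> 2" by simp
  have pw: "x [^] n = x" if x: "x \<in> carrier L" for x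
  proof (cases "x = \<zero>")
    case True then show ?thesis using n2 by (simp add: nat_pow_zero)
  next
    case False
    interpret M: group "Multiplicative_Group.mult_of L" by (rule field_mult_group)
    have "x [^]\<^bsub>Multiplicative_Group.mult_of L\<^esub> order (Multiplicative_Group.mult_of L)
        = \<one>\<^bsub>Multiplicative_Group.mult_of L\<^esub>"
      using x False by (intro M.pow_order_eq_1) simp
    then have "x [^] (n - 1) = \<one>"
      using fin by (simp add: field.order_mult_of[OF field_axioms] order_def n_def
          Multiplicative_Group.nat_pow_mult_of)
    moreover obtain m where "n = Suc m" using n2 by (cases n) auto
    ultimately show ?thesis using x by simp
  qed
  have "\<one> \<in> K" using subringE(3)[OF subfieldE(1)[OF subfield_axioms]] .
  then have "roots (poly_xn_x_c n \<one>) \<noteq> {#}"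
    using size_roots_poly_xn_x_c[OF \<open>\<one> \<in> K\<close> n2] n2 by auto
  then obtain x where "x \<in># roots (poly_xn_x_c n \<one>)" by blast
  then have x: "x \<in> carrier L" "x [^] n \<ominus> x \<ominus> \<one> = \<zero>"
    using mem_roots_poly_xn_x_c[OF \<open>\<one> \<in> K\<close> n2] by auto
  then have "\<ominus> \<one> = \<zero>" using pw[OF x(1)] by (simp add: minus_eq r_neg)
  then show False using minus_one_neq_zero by blast
qed

lemma frobenius_poly_simple_root:
  assumes p: "prime p" and char: "ring_of_nat L p = \<zero>" and r: "r = p ^ k" "r \<ge> 2"
  shows "count (roots (poly_xn_x_c r \<zero>)) a \<le> 1"
proof (cases "a \<in># roots (poly_xn_x_c r \<zero>)")
  case True
  then have a: "a \<in> carrier L" "a [^] r = a" using mem_roots_poly_xn_x[OF r(2)] by auto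
  have P: "poly_xn_x_c r \<zero> \<in> carrier (poly_ring L)"
    by (rule poly_xn_x_c_in_poly_ring[OF zero_in_K r(2)])
  have "eval (poly_xn_x_c r \<zero>) (a \<oplus> y) = eval (poly_xn_x_c r \<zero>) y" if y: "y \<in> carrier L" for y
  proof -
    have "(a \<oplus> y) [^] r = a \<oplus> y [^] r"
      using frobenius_power_add[OF p char a(1) y, of k] r(1) a(2) by simp
    then have "eval (poly_xn_x_c r \<zero>) (a \<oplus> y) = (a \<oplus> y [^] r) \<ominus> (a \<oplus> y)"
      using eval_poly_xn_x[of "a \<oplus> y", OF _ r(2)] a y by simp
    also have "\<dots> = y [^] r \<ominus> y"
      using a y nat_pow_closed[OF y, of r] unfolding minus_eq by algebra
    finally show ?thesis using eval_poly_xn_x[OF y r(2)] by simp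
  qed
  then have "alg_mult (poly_xn_x_c r \<zero>) a < 2"
    using alg_mult_lt_2_if_shift_invariant[OF infinite_carrier P a(1) r(2)] eval_poly_xn_x[OF _ r(2)]
    by blast
  then show ?thesis using alg_mult_eq_count_roots[OF P] by simp
qed (simp add: not_in_iff)

lemma card_frobenius_fixed_points:
  assumes p: "prime p" and char: "ring_of_nat L p = \<zero>" and r: "r = p ^ k" "k \<ge> 1"
  shows "card {x \<in> carrier L. x [^] r = x} = r"
proof -
  have "p \<le> r" using r prime_gt_0_nat[OF p] by (simp add: self_le_power)
  then have r2: "r \<ge> 2" using prime_ge_2_nat[OF p] by simp
  define M where "M = roots (poly_xn_x_c r \<zero>)"
  have "M = mset_set (set_mset M)"
  proof (rule multiset_eqI)
    fix a
    have "count M a \<le> 1"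
      unfolding M_def by (rule frobenius_poly_simple_root[OF p char r(1) r2])
    then have "count M a = (if a \<in># M then 1 else 0)"
      using count_eq_zero_iff by force
    then show "count M a = count (mset_set (set_mset M)) a"
      by (simp add: count_mset_set)
  qed
  then have "card (set_mset M) = size M" by (metis size_mset_set)
  also have "\<dots> = r" unfolding M_def by (rule size_roots_poly_xn_x_c[OF zero_in_K r2])
  also have "set_mset M = {x \<in> carrier L. x [^] r = x}"
    using mem_roots_poly_xn_x[OF r2] by (auto simp: M_def)
  finally show ?thesis .
qed

end

text \<open>The concrete carrier type is the one of HOL-Algebra's algebraic closure of \<open>\<int>/p\<close>.\<close>

lemma finite_field_exists:
  assumes p: "prime p" and k: "k \<ge> 1"
  obtains L :: "((int list \<times> nat) multiset \<Rightarrow> int) ring"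
  where "field L" "ring_of_nat L p = \<zero>\<^bsub>L\<^esub>" "inj_on (ring_of_nat L) {..<p}"
    and "card {x \<in> carrier L. x [^]\<^bsub>L\<^esub> (p ^ k) = x} = p ^ k"
proof -
  interpret Zp: residues_prime p "residue_ring (int p)" using p by unfold_locales auto
  define h :: "int \<Rightarrow> (int list \<times> nat) multiset \<Rightarrow> int" where "h = Zp.indexed_const"
  define L where "L = Zp.alg_closure"
  interpret L: algebraic_closure L "h ` carrier (residue_ring (int p))"
    unfolding L_def h_def by (rule Zp.alg_closureE(1))
  have h: "h \<in> ring_hom (residue_ring (int p)) L"
    unfolding L_def h_def by (rule Zp.alg_closureE(2))
  have of_nat_L: "ring_of_nat L n = h (int n mod int p)" for n
    using ring_of_nat_hom[OF ring_hom_ringI2[OF Zp.ring_axioms L.ring_axioms h], of n]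
      ring_of_nat_residue_ring[OF p, of n] by simp
  have char: "ring_of_nat L p = \<zero>\<^bsub>L\<^esub>"
    using of_nat_L[of p] ring_hom_zero[OF h Zp.ring_axioms L.ring_axioms]
    by (simp add: Zp.res_zero_eq)
  have inj_h: "inj_on h (carrier (residue_ring (int p)))"
    by (rule non_trivial_field_hom_is_inj[OF h Zp.is_field L.field_axioms])
  have "inj_on (ring_of_nat L) {..<p}"
  proof (rule inj_onI)
    fix i j assume "i \<in> {..<p}" "j \<in> {..<p}" "ring_of_nat L i = ring_of_nat L j"
    then have "h (int i) = h (int j)" "int i \<in> carrier (residue_ring (int p))"
      "int j \<in> carrier (residue_ring (int p))"
      by (simp_all add: of_nat_L Zp.res_carrier_eq)
    then have "int i = int j" using inj_onD[OF inj_h] by blast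
    then show "i = j" by simp
  qed
  then show thesis
    using that L.field_axioms char L.card_frobenius_fixed_points[OF p char refl k] by blast
qed

section \<open>Syndromes\<close>

definition (in ring) syndrome :: "nat \<Rightarrow> (nat \<Rightarrow> 'a) \<Rightarrow> (nat \<Rightarrow> nat) \<Rightarrow> nat \<Rightarrow> 'a" where
  "syndrome n e x t = (\<Oplus>i\<in>{..<n}. ring_of_nat R (x i) \<otimes> e i [^] t)"

context cring
begin

lemma syndrome_0: "syndrome n e x 0 = ring_of_nat R (\<Sum>i<n. x i)"
  by (simp add: syndrome_def ring_of_nat_sum)

lemma syndrome_frobenius_fixed:
  assumes p: "prime p" and char: "ring_of_nat R p = \<zero>"
    and e: "\<And>i. i < n \<Longrightarrow> e i \<in> carrier R \<and> e i [^] (p ^ k) = e i"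
  shows "syndrome n e x t \<in> carrier R \<and> syndrome n e x t [^] (p ^ k) = syndrome n e x t"
proof -
  have "syndrome n e x t [^] (p ^ k) = (\<Oplus>i\<in>{..<n}. (ring_of_nat R (x i) \<otimes> e i [^] t) [^] (p ^ k))"
    unfolding syndrome_def using e by (intro frobenius_power_finsum[OF p char]) auto
  also have "\<dots> = syndrome n e x t"
    unfolding syndrome_def
  proof (intro finsum_cong')
    fix i assume "i \<in> {..<n}"
    then have ei: "e i \<in> carrier R" using e by blast
    then have "(e i [^] t) [^] (p ^ k) = (e i [^] (p ^ k)) [^] t"
      by (simp add: nat_pow_pow mult.commute)
    then show "(ring_of_nat R (x i) \<otimes> e i [^] t) [^] (p ^ k) = ring_of_nat R (x i) \<otimes> e i [^] t"
      using e \<open>i \<in> {..<n}\<close> by (simp add: nat_pow_distrib ring_of_nat_power_char[OF p char])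
  qed (use e in auto)
  finally show ?thesis
    using e by (simp add: syndrome_def finsum_closed Pi_def)
qed

end

lemma (in cring) syndrome_split:
  assumes e: "e ` {..<n} \<subseteq> carrier R"
  shows "syndrome n e x t
    = (\<Oplus>i\<in>{..<n}. (ring_of_nat R (x i) \<ominus> ring_of_nat R (x' i)) \<otimes> e i [^] t) \<oplus> syndrome n e x' t"
proof -
  have distrib: "A \<otimes> E = (A \<ominus> B) \<otimes> E \<oplus> B \<otimes> E"
    if "A \<in> carrier R" "B \<in> carrier R" "E \<in> carrier R" for A B E
    using that unfolding minus_eq by algebra
  have "syndrome n e x t = (\<Oplus>i\<in>{..<n}.
      (ring_of_nat R (x i) \<ominus> ring_of_nat R (x' i)) \<otimes> e i [^] t \<oplus> ring_of_nat R (x' i) \<otimes> e i [^] t)"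
    unfolding syndrome_def
    using e distrib[of "ring_of_nat R (x i)" "ring_of_nat R (x' i)" "e i [^] t" for i]
    by (intro finsum_cong') auto
  also have "\<dots> = (\<Oplus>i\<in>{..<n}. (ring_of_nat R (x i) \<ominus> ring_of_nat R (x' i)) \<otimes> e i [^] t)
                  \<oplus> syndrome n e x' t"
    unfolding syndrome_def using e by (intro finsum_addf) auto
  finally show ?thesis .
qed

lemma (in domain) hamming_dist_ge_syndromes:
  assumes p: "prime p" and char: "ring_of_nat R p = \<zero>" and inj_p: "inj_on (ring_of_nat R) {..<p}"
    and e: "inj_on e {..<n}" "e ` {..<n} \<subseteq> carrier R"
    and x: "x \<in> {..<n} \<rightarrow>\<^sub>E {..<p}" "x' \<in> {..<n} \<rightarrow>\<^sub>E {..<p}" "x \<noteq> x'"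
    and d: "1 \<le> d" and syn: "\<And>t. t < d \<Longrightarrow> syndrome n e x t = syndrome n e x' t"
  shows "mu p d + 2 \<le> hamming_dist n x x'"
proof -
  define T where "T = {i \<in> {..<n}. x i \<noteq> x' i}"
  define z where "z i = ring_of_nat R (x i) \<ominus> ring_of_nat R (x' i)" for i
  have T: "finite T" "T \<subseteq> {..<n}" by (auto simp: T_def)
  obtain i where "x i \<noteq> x' i" using x(3) by blast
  moreover have "i < n" using calculation x(1,2) by (metis PiE_arb lessThan_iff)
  ultimately have "T \<noteq> {}" by (auto simp: T_def)
  have z: "z i \<in> carrier R - {\<zero>}" if "i \<in> T" for i
    using that x inj_p by (auto simp: z_def T_def r_right_minus_eq inj_on_def PiE_def Pi_def)
  have z_pow: "z i [^] p = z i" for i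
    using ring_of_nat_power_char[OF p char, of _ 1]
    by (simp add: z_def frobenius_diff[OF p char])
  have sum_T: "(\<Oplus>i\<in>{..<n}. z i \<otimes> e i [^] t) = (\<Oplus>i\<in>T. z i \<otimes> e i [^] t)" for t :: nat
    by (rule add.finprod_mono_neutral_cong_right) (use e in \<open>auto simp: z_def T_def minus_eq r_neg\<close>)
  have split: "syndrome n e x t = (\<Oplus>i\<in>T. z i \<otimes> e i [^] t) \<oplus> syndrome n e x' t" for t :: nat
  proof -
    have "syndrome n e x t = (\<Oplus>i\<in>{..<n}. z i \<otimes> e i [^] t) \<oplus> syndrome n e x' t"
      unfolding z_def by (rule syndrome_split[OF e(2)])
    then show ?thesis by (simp only: sum_T)
  qed
  have vanish: "(\<Oplus>i\<in>T. z i \<otimes> e i [^] t) = \<zero>" if "t < d" for t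
  proof -
    have "(\<Oplus>i\<in>T. z i \<otimes> e i [^] t) \<in> carrier R" "syndrome n e x' t \<in> carrier R"
      using e z T by (auto simp: syndrome_def image_subset_iff subset_iff intro!: finsum_closed)
    then show ?thesis using split[of t] syn[OF that] by simp
  qed
  have "mu p d + 1 < card T"
  proof (rule vanishing_power_sums_card_gt[OF T(1) \<open>T \<noteq> {}\<close> inj_on_subset[OF e(1) T(2)]])
    fix t assume t: "t < mu p d + 1"
    show "(\<Oplus>i\<in>T. z i \<otimes> e i [^] t) = \<zero>"
    proof (cases "t < d")
      case False
      then have "p dvd d" "t = d" using t d by (auto simp: mu_def split: if_splits)
      then obtain m where m: "t = p * m" by blast
      then have "m < d" using d \<open>t = d\<close> prime_gt_1_nat[OF p] by simp
      then show ?thesis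
        unfolding m using vanish[OF \<open>m < d\<close>] e T z z_pow
        by (intro power_sums_vanish_at_char_multiple[OF p char T(1)]) auto
    qed (rule vanish)
  qed (use e T z in auto)
  then show ?thesis by (simp add: hamming_dist_def T_def)
qed

lemma (in domain) min_dist_syndrome_class:
  assumes p: "prime p" and char: "ring_of_nat R p = \<zero>" and inj_p: "inj_on (ring_of_nat R) {..<p}"
    and e: "inj_on e {..<n}" "e ` {..<n} \<subseteq> carrier R"
    and "q \<le> p" and d: "1 \<le> d" and C: "C \<subseteq> const_comp_words q n \<omega>"
    and syn: "\<And>x x' t. x \<in> C \<Longrightarrow> x' \<in> C \<Longrightarrow> t \<in> {1..<d} \<Longrightarrow> syndrome n e x t = syndrome n e x' t"
  shows "min_dist_at_least n C (mu p d + 2)"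
  unfolding min_dist_at_least_def
proof (intro ballI impI)
  fix x x' assume x: "x \<in> C" "x' \<in> C" "x \<noteq> x'"
  have words: "x \<in> const_comp_words_on {..<n} q \<omega>" "x' \<in> const_comp_words_on {..<n} q \<omega>"
    using x C by (auto simp: const_comp_words_eq_on)
  then have "x \<in> {..<n} \<rightarrow>\<^sub>E {..<p}" "x' \<in> {..<n} \<rightarrow>\<^sub>E {..<p}"
    using \<open>q \<le> p\<close> by (auto simp: const_comp_words_on_def PiE_def Pi_def)
  moreover have "syndrome n e x t = syndrome n e x' t" if "t < d" for t
  proof (cases "t = 0")
    case True
    have "(\<Sum>i<n. x i) = (\<Sum>i<n. x' i)"
      using sum_const_comp_word[OF _ words(1)] sum_const_comp_word[OF _ words(2)] by simp
    then show ?thesis unfolding True syndrome_0 by simp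
  next
    case False
    then show ?thesis using syn[OF x(1,2)] that by simp
  qed
  ultimately show "mu p d + 2 \<le> hamming_dist n x x'"
    by (rule hamming_dist_ge_syndromes[OF p char inj_p e _ _ x(3) d])
qed

lemma (in domain) exists_syndrome_class_code:
  assumes p: "prime p" and char: "ring_of_nat R p = \<zero>" and inj_p: "inj_on (ring_of_nat R) {..<p}"
    and "q \<le> p" and d: "1 \<le> d" and \<omega>: "(\<Sum>j<q. \<omega> j) = n"
    and e: "bij_betw e {..<n} F" "F \<subseteq> carrier R" and closed: "\<And>x t. syndrome n e x t \<in> F"
  shows "\<exists>C. C \<subseteq> const_comp_words q n \<omega> \<and> min_dist_at_least n C (mu p d + 2)
           \<and> real (card C) \<ge> multinomial q n \<omega> / real n ^ (d - 1)"
proof -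
  define W where "W = const_comp_words q n \<omega>"
  define Y where "Y = {1..<d} \<rightarrow>\<^sub>E F"
  define syndromes where "syndromes x = (\<lambda>t\<in>{1..<d}. syndrome n e x t)" for x
  have "finite F" "card F = n"
    using bij_betw_finite[OF e(1)] bij_betw_same_card[OF e(1)] by auto
  then have card_Y: "card Y = n ^ (d - 1)" by (simp add: Y_def card_PiE)
  have "finite W"
    unfolding W_def const_comp_words_eq_on by (rule finite_const_comp_words_on) simp
  moreover have "syndromes ` W \<subseteq> Y" using closed by (auto simp: syndromes_def Y_def)
  moreover have "finite Y" unfolding Y_def using \<open>finite F\<close> by (intro finite_PiE) auto
  moreover have "Y \<noteq> {}" using closed by (auto simp: Y_def PiE_eq_empty_iff)
  ultimately obtain s where s: "card W \<le> card Y * card {x \<in> W. syndromes x = s}"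
    using exists_large_fiber[of W syndromes Y] by blast
  define C where "C = {x \<in> W. syndromes x = s}"
  have "real (card W) \<le> real (card Y * card C)"
    using s unfolding C_def by (simp only: of_nat_le_iff)
  moreover have "n > 0" using closed \<open>finite F\<close> \<open>card F = n\<close> card_gt_0_iff by blast
  ultimately have "real (card C) \<ge> multinomial q n \<omega> / real n ^ (d - 1)"
    using card_const_comp_words[OF \<omega>] card_Y by (simp add: W_def field_simps)
  moreover have "C \<subseteq> const_comp_words q n \<omega>" by (simp add: C_def W_def)
  moreover have "min_dist_at_least n C (mu p d + 2)"
  proof (rule min_dist_syndrome_class[OF p char inj_p _ _ \<open>q \<le> p\<close> d \<open>C \<subseteq> _\<close>])
    show "inj_on e {..<n}" "e ` {..<n} \<subseteq> carrier R" using e by (auto simp: bij_betw_def)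
    fix x x' t assume "x \<in> C" "x' \<in> C" "t \<in> {1..<d}"
    then have "syndromes x t = syndromes x' t" by (simp add: C_def)
    then show "syndrome n e x t = syndrome n e x' t"
      using \<open>t \<in> {1..<d}\<close> by (simp add: syndromes_def)
  qed
  ultimately show ?thesis by blast
qed

theorem theorem1:
  fixes q p r d0 :: nat and \<omega> :: "nat \<Rightarrow> nat"
  assumes "q \<ge> 3"
    and "prime p" and "p \<ge> q"
    and "\<exists>k. r = p ^ k"
    and "(\<Sum>j<q. \<omega> j) = r"
    and "1 \<le> d0" and "d0 + 2 \<le> r"
  shows "\<exists>C. C \<subseteq> const_comp_words q r \<omega>
           \<and> min_dist_at_least r C (mu p d0 + 2)
           \<and> real (card C) \<ge> multinomial q r \<omega> / real r ^ (d0 - 1)"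
proof -
  obtain k where r: "r = p ^ k" using assms(4) by blast
  with assms(7) have "k \<ge> 1" by (cases k) auto
  then obtain L :: "((int list \<times> nat) multiset \<Rightarrow> int) ring"
    where L: "field L" "ring_of_nat L p = \<zero>\<^bsub>L\<^esub>" "inj_on (ring_of_nat L) {..<p}"
      and card_F: "card {x \<in> carrier L. x [^]\<^bsub>L\<^esub> r = x} = r"
    using finite_field_exists[OF assms(2)] r by blast
  interpret L: field L by (rule L(1))
  define F where "F = {x \<in> carrier L. x [^]\<^bsub>L\<^esub> r = x}"
  have "finite F" using card_F assms(7) by (simp add: F_def card_ge_0_finite)
  then obtain e where e: "bij_betw e {..<r} F"
    using ex_bij_betw_nat_finite card_F by (fastforce simp: F_def atLeast0LessThan)
  then have "e i \<in> carrier L \<and> e i [^]\<^bsub>L\<^esub> (p ^ k) = e i" if "i < r" for i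
    using that r by (auto simp: bij_betw_def F_def)
  then have "L.syndrome r e x t \<in> F" for x t
    using L.syndrome_frobenius_fixed[OF assms(2) L(2)] unfolding F_def r by blast
  then show ?thesis
    using L.exists_syndrome_class_code[OF assms(2) L(2,3) assms(3,6,5) e] by (auto simp: F_def)
qed

end
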